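(* Let $G=(V,E,L)$ be a complete graph with loops, $n:=|V|$, whose set of plus loops is $L^+=\{\{j,j\}\}$ for some $j\in V$ (minus loops $L^-$ arbitrary). Introduce auxiliary variables $z_S$ for all $S\subseteq V$ with $|S|\ge3$. Then $\mathrm{QP}(G)$ equals the projection onto the coordinates $V\cup E\cup L$ of the set of all vectors satisfying $$z_{jj}\ \ge\sum_{J\subseteq V:\, j\in J}\frac{\big(\ell_n(J,V\setminus J)\big)^2}{\ell_{n-1}(J\setminus\{j\},V\setminus J)},\qquad \ell_n(J,V\setminus J)\ge0\ \ \forall J\subseteq V,$$ $$z_{ii}\le z_i,\quad z_i\in[0,1]\qquad\forall\{i,i\}\in L^-.$$
   Context: A graph with loops is $G=(V,E,L)$: $V$ finite node set, $E$ a set of unordered pairs of distinct nodes, $L$ a set of loops $\{i,i\}$ partitioned as $L=L^-\cup L^+$ (minus/plus loops); it is complete if $E$ contains all pairs of distinct nodes. $\mathrm{QP}(G):=\mathrm{conv}\{z\in\mathbb{R}^{V\cup E\cup L}: z_{ii}\ge z_i^2\ \forall\{i,i\}\in L^+,\ z_{ii}\le z_i^2\ \forall \{i,i\}\in L^-,\ z_{ij}=z_iz_j\ \forall \{i,j\}\in E,\ z_i\in[0,1]\ \forall i\in V\}$. For $S\subseteq V$: $z_\emptyset:=1$, $z_{\{k\}}:=z_k$, $z_{\{k,l\}}$ the edge variable, and $z_S$ auxiliary for $|S|\ge3$ (loop variables $z_{ii}$ are distinct). For disjoint $J_1,J_2$ with $|J_1\cup J_2|=d$, $\ell_d(J_1,J_2):=\sum_{t\subseteq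 J_2}(-1)^{|t|}z_{J_1\cup t}$. Each $u^2/v$ denotes the closed perspective: $u^2/v$ if $v>0$, $0$ if $u=v=0$, $+\infty$ if $u\ne0,v=0$. *)

theory Defs
  imports "HOL-Analysis.Analysis" "HOL-Library.Function_Algebras"
begin

instantiation "fun" :: (type, real_vector) real_vector
begin
definition scaleR_fun :: "real \<Rightarrow> ('a \<Rightarrow> 'b) \<Rightarrow> 'a \<Rightarrow> 'b"
  where "scaleR_fun r f = (\<lambda>x. r *\<^sub>R f x)"
instance
  by standard (auto simp: scaleR_fun_def fun_eq_iff plus_fun_def scaleR_add_right scaleR_add_left)
end

text \<open>A point of R^(V \<union> E \<union> L) is a real function on coordinates; coordinates are
nodes i, edges {k,l} (unordered pairs of distinct nodes, as 2-element sets) and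
loops {i,i} (indexed by the node i).  Coordinates outside V \<union> E \<union> L are required
to be 0, so such functions are exactly the points of R^(V \<union> E \<union> L).\<close>

datatype 'a coord = Node 'a | Edge "'a set" | Loop 'a

text \<open>Complete graph on V: E = all 2-element subsets of V. Loops are given by the set
of nodes carrying a loop; Lm = minus loops, Lp = plus loops.\<close>

definition edges_complete :: "'a set \<Rightarrow> 'a set set" where
  "edges_complete V = {e. e \<subseteq> V \<and> card e = 2}"

definition coords :: "'a set \<Rightarrow> 'a set \<Rightarrow> 'a set \<Rightarrow> 'a coord set" where
  "coords V Lm Lp = Node ` V \<union> Edge ` edges_complete V \<union> Loop ` (Lm \<union> Lp)"

definition supported_on :: "'c set \<Rightarrow> ('c \<Rightarrow> real) \<Rightarrow> bool" where
  "supported_on C z \<longleftrightarrow> (\<forall>c. c \<notin> C \<longrightarrow> z c = 0)"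

definition QP :: "'a set \<Rightarrow> 'a set \<Rightarrow> 'a set \<Rightarrow> ('a coord \<Rightarrow> real) set" where
  "QP V Lm Lp = convex hull
     {z. supported_on (coords V Lm Lp) z
       \<and> (\<forall>i\<in>Lp. z (Loop i) \<ge> (z (Node i))\<^sup>2)
       \<and> (\<forall>i\<in>Lm. z (Loop i) \<le> (z (Node i))\<^sup>2)
       \<and> (\<forall>e\<in>edges_complete V. \<forall>k l. e = {k, l} \<longrightarrow> z (Edge e) = z (Node k) * z (Node l))
       \<and> (\<forall>i\<in>V. 0 \<le> z (Node i) \<and> z (Node i) \<le> 1)}"

definition zS :: "('a coord \<Rightarrow> real) \<Rightarrow> ('a set \<Rightarrow> real) \<Rightarrow> 'a set \<Rightarrow> real" where
  "zS z a S = (if S = {} then 1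
               else if card S = 1 then z (Node (the_elem S))
               else if card S = 2 then z (Edge S)
               else a S)"

text \<open>\<ell>_d(J1,J2) = \<Sum>_{t \<subseteq> J2} (-1)^|t| z_{J1 \<union> t}  (d = |J1 \<union> J2| is only a label).\<close>

definition ell :: "('a coord \<Rightarrow> real) \<Rightarrow> ('a set \<Rightarrow> real) \<Rightarrow> 'a set \<Rightarrow> 'a set \<Rightarrow> real" where
  "ell z a J1 J2 = (\<Sum>t\<in>Pow J2. (-1) ^ card t * zS z a (J1 \<union> t))"

text \<open>Closed perspective u^2/v: u^2/v if v > 0, 0 if u = v = 0, +\<infinity> otherwise
(the case v < 0 never arises under the constraints \<ell>_n \<ge> 0; we set it to +\<infinity>).\<close>

definition persp :: "real \<Rightarrow> real \<Rightarrow> ereal" where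
  "persp u v = (if v > 0 then ereal (u\<^sup>2 / v) else if u = 0 \<and> v = 0 then 0 else \<infinity>)"

end

theory Submission
  imports Defs
begin

text \<open>By Moebius inversion on the subsets of \<open>V\<close>, \<open>z_S = \<Sum>_(J \<supseteq> S) \<ell>_n(J, V - J)\<close>, so the
  constraints \<open>\<ell>_n \<ge> 0\<close> make \<open>(z_S)_S\<close> a convex combination of the 0/1-points \<open>1_J\<close>. Pairing
  \<open>J \<ni> j\<close> with \<open>J - {j}\<close> replaces each pair by one point of \<open>[0,1]^V\<close> whose \<open>j\<close>-th
  coordinate is \<open>\<ell>_n(J, V - J) / \<ell>_(n-1)(J - {j}, V - J)\<close>; the loop inequality then says
  that \<open>z_jj\<close> dominates the average of the squares of these coordinates, so \<open>z\<close> lies in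
  \<open>QP(G)\<close>. Conversely each generator of \<open>QP(G)\<close> satisfies the system with
  \<open>z_S = \<Prod>_(i \<in> S) z_i\<close>, and the system is convex because \<open>u\<^sup>2 / v\<close> is jointly convex.\<close>

lemma sum_apply:
  fixes f :: "'b \<Rightarrow> 'c \<Rightarrow> 'd::comm_monoid_add"
  assumes "finite A"
  shows "sum f A x = (\<Sum>k\<in>A. f k x)"
  using assms by (induction A rule: finite_induct) auto

lemma sum_Pow_insert:
  assumes "finite X" "j \<notin> X"
  shows "(\<Sum>J\<in>Pow (insert j X). g J) = (\<Sum>K\<in>Pow X. g (insert j K) + g K)"
proof -
  have "inj_on (insert j) (Pow X)"
    using assms(2) by (auto simp: inj_on_def)
  moreover have "Pow X \<inter> insert j ` Pow X = {}"
    using assms(2) by auto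
  ultimately show ?thesis
    unfolding Pow_insert using assms(1)
    by (simp add: sum.union_disjoint sum.reindex sum.distrib add.commute)
qed

lemma sum_Pow_pair_remove:
  assumes "finite V" "j \<in> V"
  shows "(\<Sum>J\<in>Pow V. g J) = (\<Sum>J | J \<subseteq> V \<and> j \<in> J. g J + g (J - {j}))"
proof -
  have "(\<Sum>J\<in>Pow V. g J) = (\<Sum>K\<in>Pow (V - {j}). g (insert j K) + g K)"
    using sum_Pow_insert[of "V - {j}" j g] assms by (simp add: insert_absorb)
  also have "\<dots> = (\<Sum>J | J \<subseteq> V \<and> j \<in> J. g J + g (J - {j}))"
    by (rule sum.reindex_bij_witness[where i = "\<lambda>J. J - {j}" and j = "insert j"])
      (use assms(2) in \<open>auto simp: subset_Diff_insert\<close>)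
  finally show ?thesis .
qed

lemma sum_Pow_alternating_prod:
  fixes y :: "'a \<Rightarrow> 'b::comm_ring_1"
  assumes "finite A"
  shows "(\<Sum>t\<in>Pow A. (-1) ^ card t * (\<Prod>i\<in>t. y i)) = (\<Prod>i\<in>A. 1 - y i)"
  using prod_add[OF assms, of "\<lambda>i. - y i" "\<lambda>_. 1"] by (simp add: prod_uminus)

definition alt_sum :: "('a set \<Rightarrow> 'b::comm_ring_1) \<Rightarrow> 'a set \<Rightarrow> 'a set \<Rightarrow> 'b" where
  "alt_sum f J1 J2 = (\<Sum>t\<in>Pow J2. (-1) ^ card t * f (J1 \<union> t))"

lemma ell_eq_alt_sum: "ell z a = alt_sum (zS z a)"
  by (simp add: fun_eq_iff ell_def alt_sum_def)

lemma alt_sum_insert: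
  assumes "finite J2" "j \<notin> J2"
  shows "alt_sum f J1 (insert j J2) = alt_sum f J1 J2 - alt_sum f (insert j J1) J2"
proof -
  have "alt_sum f J1 (insert j J2)
      = (\<Sum>t\<in>Pow J2. (-1) ^ card (insert j t) * f (J1 \<union> insert j t) + (-1) ^ card t * f (J1 \<union> t))"
    unfolding alt_sum_def using assms by (rule sum_Pow_insert)
  also have "\<dots> = (\<Sum>t\<in>Pow J2. (-1) ^ card t * f (J1 \<union> t) - (-1) ^ card t * f (insert j J1 \<union> t))"
  proof (rule sum.cong)
    fix t assume "t \<in> Pow J2"
    then have "finite t" "j \<notin> t"
      using assms finite_subset by auto
    then show "(-1) ^ card (insert j t) * f (J1 \<union> insert j t) + (-1) ^ card t * f (J1 \<union> t)
        = (-1) ^ card t * f (J1 \<union> t) - (-1) ^ card t * f (insert j J1 \<union> t)"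
      by simp
  qed simp
  finally show ?thesis
    by (simp add: alt_sum_def sum_subtractf)
qed

lemma sum_Pow_alt_sum:
  assumes "finite W" "S \<inter> W = {}"
  shows "(\<Sum>T\<in>Pow W. alt_sum f (S \<union> T) (W - T)) = f S"
  using assms
proof (induction W rule: finite_induct)
  case empty
  show ?case by (simp add: alt_sum_def)
next
  case (insert x W)
  have "(\<Sum>T\<in>Pow (insert x W). alt_sum f (S \<union> T) (insert x W - T))
      = (\<Sum>T\<in>Pow W. alt_sum f (S \<union> insert x T) (insert x W - insert x T)
          + alt_sum f (S \<union> T) (insert x W - T))"
    using insert.hyps by (rule sum_Pow_insert)
  also have "\<dots> = (\<Sum>T\<in>Pow W. alt_sum f (S \<union> T) (W - T))"
  proof (rule sum.cong)
    fix T assume "T \<in> Pow W"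
    then have "insert x W - insert x T = W - T" "insert x W - T = insert x (W - T)"
      "S \<union> insert x T = insert x (S \<union> T)"
      using insert.hyps by auto
    then show "alt_sum f (S \<union> insert x T) (insert x W - insert x T) + alt_sum f (S \<union> T) (insert x W - T)
        = alt_sum f (S \<union> T) (W - T)"
      using insert.hyps by (simp add: alt_sum_insert)
  qed simp
  also have "\<dots> = f S"
    using insert by simp
  finally show ?case .
qed

lemma moebius_inversion_Pow:
  assumes "finite V" "S \<subseteq> V"
  shows "(\<Sum>J\<in>Pow V. of_bool (S \<subseteq> J) * alt_sum f J (V - J)) = f S"
proof -
  have "Pow V \<inter> {J. S \<subseteq> J} = {J. J \<subseteq> V \<and> S \<subseteq> J}"
    by auto
  then have "(\<Sum>J\<in>Pow V. of_bool (S \<subseteq> J) * alt_sum f J (V - J))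
      = (\<Sum>J | J \<subseteq> V \<and> S \<subseteq> J. alt_sum f J (V - J))"
    using assms(1) by simp
  also have "\<dots> = (\<Sum>T\<in>Pow (V - S). alt_sum f (S \<union> T) ((V - S) - T))"
    by (rule sum.reindex_bij_witness[where i = "\<lambda>T. S \<union> T" and j = "\<lambda>J. J - S"])
      (use assms(2) in \<open>auto intro!: arg_cong2[where f = "alt_sum f"]\<close>)
  also have "\<dots> = f S"
    using assms by (intro sum_Pow_alt_sum) auto
  finally show ?thesis .
qed

lemma alt_sum_prod:
  fixes y :: "'a \<Rightarrow> 'b::comm_ring_1"
  assumes "finite J1" "finite J2" "J1 \<inter> J2 = {}"
  shows "alt_sum (\<lambda>S. \<Prod>i\<in>S. y i) J1 J2 = (\<Prod>i\<in>J1. y i) * (\<Prod>i\<in>J2. 1 - y i)"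
proof -
  have "alt_sum (\<lambda>S. \<Prod>i\<in>S. y i) J1 J2 = (\<Sum>t\<in>Pow J2. (\<Prod>i\<in>J1. y i) * ((-1) ^ card t * (\<Prod>i\<in>t. y i)))"
    unfolding alt_sum_def
  proof (rule sum.cong)
    fix t assume "t \<in> Pow J2"
    then have "finite t" "J1 \<inter> t = {}"
      using assms finite_subset by auto
    then show "(-1) ^ card t * (\<Prod>i\<in>J1 \<union> t. y i) = (\<Prod>i\<in>J1. y i) * ((-1) ^ card t * (\<Prod>i\<in>t. y i))"
      using assms(1) by (simp add: prod.union_disjoint mult_ac)
  qed simp
  also have "\<dots> = (\<Prod>i\<in>J1. y i) * (\<Prod>i\<in>J2. 1 - y i)"
    by (simp add: sum_distrib_left[symmetric] sum_Pow_alternating_prod assms(2))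
  finally show ?thesis .
qed

lemma ell_remove:
  assumes "finite V" "j \<in> J" "J \<subseteq> V"
  shows "ell z a (J - {j}) (V - J) = ell z a J (V - J) + ell z a (J - {j}) (V - (J - {j}))"
proof -
  have sets: "V - (J - {j}) = insert j (V - J)" "insert j (J - {j}) = J"
    using assms by auto
  have "alt_sum (zS z a) (J - {j}) (insert j (V - J))
      = alt_sum (zS z a) (J - {j}) (V - J) - alt_sum (zS z a) (insert j (J - {j})) (V - J)"
    using assms by (intro alt_sum_insert) auto
  then show ?thesis
    unfolding ell_eq_alt_sum sets by simp
qed

lemma zS_eq_sum_pairs:
  assumes "finite V" "j \<in> V" "S \<subseteq> V"
  shows "zS z a S = (\<Sum>J | J \<subseteq> V \<and> j \<in> J. of_bool (S \<subseteq> J) * ell z a J (V - J)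
                        + of_bool (S \<subseteq> J - {j}) * ell z a (J - {j}) (V - (J - {j})))"
proof -
  have "zS z a S = (\<Sum>J\<in>Pow V. of_bool (S \<subseteq> J) * ell z a J (V - J))"
    using moebius_inversion_Pow[OF assms(1,3), of "zS z a"] by (simp only: ell_eq_alt_sum)
  also have "\<dots> = (\<Sum>J | J \<subseteq> V \<and> j \<in> J. of_bool (S \<subseteq> J) * ell z a J (V - J)
                        + of_bool (S \<subseteq> J - {j}) * ell z a (J - {j}) (V - (J - {j})))"
    by (rule sum_Pow_pair_remove[OF assms(1,2)])
  finally show ?thesis .
qed

lemma ell_convex_comb:
  assumes "u + v = 1"
  shows "ell (u *\<^sub>R z1 + v *\<^sub>R z2) (\<lambda>S. u * a1 S + v * a2 S) J1 J2
       = u * ell z1 a1 J1 J2 + v * ell z2 a2 J1 J2"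
proof -
  have "zS (u *\<^sub>R z1 + v *\<^sub>R z2) (\<lambda>S. u * a1 S + v * a2 S) S = u * zS z1 a1 S + v * zS z2 a2 S" for S
    using assms by (simp add: zS_def scaleR_fun_def)
  then show ?thesis
    by (simp add: ell_def sum_distrib_left sum.distrib algebra_simps)
qed

definition quad_over_lin :: "real \<Rightarrow> real \<Rightarrow> real" where
  "quad_over_lin u v = (if v > 0 then u\<^sup>2 / v else 0)"

lemma persp_eq_quad_over_lin: "0 \<le> u \<Longrightarrow> u \<le> v \<Longrightarrow> persp u v = ereal (quad_over_lin u v)"
  by (auto simp: persp_def quad_over_lin_def)

lemma quad_over_lin_eq_mult_square: "0 \<le> v \<Longrightarrow> quad_over_lin u v = v * (u / v)\<^sup>2"
  by (auto simp: quad_over_lin_def power2_eq_square)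

lemma quad_over_lin_scale: "0 \<le> s \<Longrightarrow> quad_over_lin (s * u) (s * v) = s * quad_over_lin u v"
  by (cases "s = 0") (auto simp: quad_over_lin_def zero_less_mult_iff power2_eq_square)

lemma quad_over_lin_subadd:
  assumes "0 \<le> a" "a \<le> c" "0 \<le> b" "b \<le> d"
  shows "quad_over_lin (a + b) (c + d) \<le> quad_over_lin a c + quad_over_lin b d"
proof -
  consider "c = 0" | "d = 0" | "c > 0" "d > 0"
    using assms by linarith
  then show ?thesis
  proof cases
    case 3
    have "a\<^sup>2 / c + b\<^sup>2 / d - (a + b)\<^sup>2 / (c + d) = (a * d - b * c)\<^sup>2 / (c * d * (c + d))"
      using 3 by (simp add: field_simps power2_eq_square)
    also have "\<dots> \<ge> 0"
      using 3 by simp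
    finally show ?thesis
      using 3 by (simp add: quad_over_lin_def)
  qed (use assms in \<open>auto simp: quad_over_lin_def\<close>)
qed

lemma quad_over_lin_convex_comb:
  assumes "0 \<le> u1" "u1 \<le> v1" "0 \<le> u2" "u2 \<le> v2" "0 \<le> s" "0 \<le> t"
  shows "quad_over_lin (s * u1 + t * u2) (s * v1 + t * v2) \<le> s * quad_over_lin u1 v1 + t * quad_over_lin u2 v2"
  unfolding quad_over_lin_scale[OF assms(5), symmetric] quad_over_lin_scale[OF assms(6), symmetric]
  using assms by (intro quad_over_lin_subadd) (auto intro: mult_left_mono)

definition QP_generators :: "'a set \<Rightarrow> 'a set \<Rightarrow> 'a set \<Rightarrow> ('a coord \<Rightarrow> real) set" where
  "QP_generators V Lm Lp =
     {z. supported_on (coords V Lm Lp) z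
       \<and> (\<forall>i\<in>Lp. z (Loop i) \<ge> (z (Node i))\<^sup>2)
       \<and> (\<forall>i\<in>Lm. z (Loop i) \<le> (z (Node i))\<^sup>2)
       \<and> (\<forall>e\<in>edges_complete V. \<forall>k l. e = {k, l} \<longrightarrow> z (Edge e) = z (Node k) * z (Node l))
       \<and> (\<forall>i\<in>V. 0 \<le> z (Node i) \<and> z (Node i) \<le> 1)}"

lemma QP_eq_convex_hull: "QP V Lm Lp = convex hull QP_generators V Lm Lp"
  by (simp add: QP_def QP_generators_def)

definition lift_point :: "'a set \<Rightarrow> 'a set \<Rightarrow> ('a \<Rightarrow> real) \<Rightarrow> ('a \<Rightarrow> real) \<Rightarrow> 'a coord \<Rightarrow> real" where
  "lift_point V L y w c = (case c of
       Node i \<Rightarrow> if i \<in> V then y i else 0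
     | Edge e \<Rightarrow> if e \<in> edges_complete V then (\<Prod>i\<in>e. y i) else 0
     | Loop i \<Rightarrow> if i \<in> L then w i else 0)"

lemma lift_point_in_QP_generators:
  assumes "Lm \<union> Lp \<subseteq> V" "\<forall>i\<in>V. 0 \<le> y i \<and> y i \<le> 1"
    "\<forall>i\<in>Lp. (y i)\<^sup>2 \<le> w i" "\<forall>i\<in>Lm. w i \<le> (y i)\<^sup>2"
  shows "lift_point V (Lm \<union> Lp) y w \<in> QP_generators V Lm Lp"
  unfolding QP_generators_def
proof (intro CollectI conjI ballI allI impI)
  show "supported_on (coords V Lm Lp) (lift_point V (Lm \<union> Lp) y w)"
    unfolding supported_on_def
  proof (intro allI impI)
    fix c assume "c \<notin> coords V Lm Lp"
    then show "lift_point V (Lm \<union> Lp) y w c = 0"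
      by (cases c) (auto simp: coords_def lift_point_def)
  qed
next
  fix e k l assume "e \<in> edges_complete V" "e = {k, l}"
  moreover from this have "k \<noteq> l"
    by (auto simp: edges_complete_def)
  ultimately show "lift_point V (Lm \<union> Lp) y w (Edge e)
      = lift_point V (Lm \<union> Lp) y w (Node k) * lift_point V (Lm \<union> Lp) y w (Node l)"
    by (auto simp: lift_point_def edges_complete_def)
qed (use assms in \<open>auto simp: lift_point_def\<close>)

lemma supported_eq_sum_lift_point:
  assumes "finite I" "supported_on (coords V Lm Lp) z"
    and "\<forall>i\<in>V. z (Node i) = (\<Sum>k\<in>I. \<mu> k * y k i)"
    and "\<forall>e\<in>edges_complete V. z (Edge e) = (\<Sum>k\<in>I. \<mu> k * (\<Prod>i\<in>e. y k i))"
    and "\<forall>i\<in>Lm \<union> Lp. z (Loop i) = (\<Sum>k\<in>I. \<mu> k * w k i)"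
  shows "z = (\<Sum>k\<in>I. \<mu> k *\<^sub>R lift_point V (Lm \<union> Lp) (y k) (w k))"
proof
  fix c
  have "z c = (\<Sum>k\<in>I. \<mu> k * lift_point V (Lm \<union> Lp) (y k) (w k) c)"
  proof (cases "c \<in> coords V Lm Lp")
    case False
    then show ?thesis
      using assms(2) by (cases c) (auto simp: supported_on_def coords_def lift_point_def image_iff)
  qed (use assms(3-5) in \<open>auto simp: coords_def lift_point_def\<close>)
  then show "z c = (\<Sum>k\<in>I. \<mu> k *\<^sub>R lift_point V (Lm \<union> Lp) (y k) (w k)) c"
    using assms(1) by (simp add: sum_apply scaleR_fun_def)
qed

lemma zS_QP_generator:
  assumes "x \<in> QP_generators V Lm Lp"
  shows "zS x (\<lambda>S. \<Prod>i\<in>S. x (Node i)) = (\<lambda>S. \<Prod>i\<in>S. x (Node i))"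
proof -
  have node_zero: "x (Node i) = 0" if "i \<notin> V" for i
    using assms that by (auto simp: QP_generators_def supported_on_def coords_def)
  have edge: "x (Edge {k, l}) = x (Node k) * x (Node l)" if "k \<noteq> l" for k l
  proof (cases "{k, l} \<subseteq> V")
    case True
    then have "{k, l} \<in> edges_complete V"
      using that by (simp add: edges_complete_def)
    then show ?thesis
      using assms by (simp add: QP_generators_def)
  next
    case False
    then have "Edge {k, l} \<notin> coords V Lm Lp"
      by (auto simp: coords_def edges_complete_def)
    then have "x (Edge {k, l}) = 0"
      using assms by (simp add: QP_generators_def supported_on_def)
    then show ?thesis
      using False node_zero by auto
  qed
  show ?thesis
  proof
    fix S :: "'a set"
    show "zS x (\<lambda>S. \<Prod>i\<in>S. x (Node i)) S = (\<Prod>i\<in>S. x (Node i))"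
      by (cases "card S = 2") (auto simp: zS_def card_2_iff card_1_singleton_iff edge)
  qed
qed

definition persp_sum :: "'a set \<Rightarrow> 'a \<Rightarrow> ('a coord \<Rightarrow> real) \<Rightarrow> ('a set \<Rightarrow> real) \<Rightarrow> real" where
  "persp_sum V j z a =
     (\<Sum>J | J \<subseteq> V \<and> j \<in> J. quad_over_lin (ell z a J (V - J)) (ell z a (J - {j}) (V - J)))"

definition extended_feasible ::
    "'a set \<Rightarrow> 'a set \<Rightarrow> 'a \<Rightarrow> ('a coord \<Rightarrow> real) \<Rightarrow> ('a set \<Rightarrow> real) \<Rightarrow> bool" where
  "extended_feasible V Lm j z a \<longleftrightarrow>
     persp_sum V j z a \<le> z (Loop j)
     \<and> (\<forall>J. J \<subseteq> V \<longrightarrow> 0 \<le> ell z a J (V - J))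
     \<and> (\<forall>i\<in>Lm. z (Loop i) \<le> z (Node i) \<and> 0 \<le> z (Node i) \<and> z (Node i) \<le> 1)"

definition extended_formulation :: "'a set \<Rightarrow> 'a set \<Rightarrow> 'a \<Rightarrow> ('a coord \<Rightarrow> real) set" where
  "extended_formulation V Lm j =
     {z. supported_on (coords V Lm {j}) z \<and> (\<exists>a. extended_feasible V Lm j z a)}"

lemma ell_persp_bounds:
  assumes "finite V" "\<forall>J. J \<subseteq> V \<longrightarrow> 0 \<le> ell z a J (V - J)" "J \<subseteq> V" "j \<in> J"
  shows "0 \<le> ell z a J (V - J)" "ell z a J (V - J) \<le> ell z a (J - {j}) (V - J)"
proof -
  have "J - {j} \<subseteq> V"
    using assms(3) by blast
  then have "0 \<le> ell z a (J - {j}) (V - (J - {j}))"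
    using assms(2) by blast
  then show "0 \<le> ell z a J (V - J)" "ell z a J (V - J) \<le> ell z a (J - {j}) (V - J)"
    using assms(2,3) ell_remove[OF assms(1,4,3), of z a] by auto
qed

lemma sum_persp_eq_persp_sum:
  assumes "finite V" "\<forall>J. J \<subseteq> V \<longrightarrow> 0 \<le> ell z a J (V - J)"
  shows "(\<Sum>J\<in>{J. J \<subseteq> V \<and> j \<in> J}. persp (ell z a J (V - J)) (ell z a (J - {j}) (V - J)))
       = ereal (persp_sum V j z a)"
  unfolding persp_sum_def sum_ereal[symmetric]
  using ell_persp_bounds[OF assms] by (intro sum.cong) (auto intro: persp_eq_quad_over_lin)

lemma extended_feasible_iff:
  assumes "finite V"
  shows "(ereal (z (Loop j)) \<ge>
            (\<Sum>J\<in>{J. J \<subseteq> V \<and> j \<in> J}. persp (ell z a J (V - J)) (ell z a (J - {j}) (V - J)))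
          \<and> (\<forall>J. J \<subseteq> V \<longrightarrow> ell z a J (V - J) \<ge> 0)
          \<and> (\<forall>i\<in>Lm. z (Loop i) \<le> z (Node i) \<and> 0 \<le> z (Node i) \<and> z (Node i) \<le> 1))
       \<longleftrightarrow> extended_feasible V Lm j z a"
  using sum_persp_eq_persp_sum[OF assms, of z a j] unfolding extended_feasible_def by auto

lemma extended_feasible_convex_comb:
  assumes "extended_feasible V Lm j z1 a1" "extended_feasible V Lm j z2 a2"
    and "finite V" "0 \<le> u" "0 \<le> v" "u + v = 1"
  shows "extended_feasible V Lm j (u *\<^sub>R z1 + v *\<^sub>R z2) (\<lambda>S. u * a1 S + v * a2 S)"
proof -
  let ?z = "u *\<^sub>R z1 + v *\<^sub>R z2" and ?a = "\<lambda>S. u * a1 S + v * a2 S"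
  have z: "?z c = u * z1 c + v * z2 c" for c
    by (simp add: scaleR_fun_def)
  note ell = ell_convex_comb[OF assms(6), of z1 z2 a1 a2]
  have nonneg: "\<forall>J. J \<subseteq> V \<longrightarrow> 0 \<le> ell z1 a1 J (V - J)" "\<forall>J. J \<subseteq> V \<longrightarrow> 0 \<le> ell z2 a2 J (V - J)"
    using assms(1,2) by (simp_all add: extended_feasible_def)
  have "persp_sum V j ?z ?a \<le> u * persp_sum V j z1 a1 + v * persp_sum V j z2 a2"
    unfolding persp_sum_def sum_distrib_left sum.distrib[symmetric] ell
    using ell_persp_bounds[OF assms(3) nonneg(1)] ell_persp_bounds[OF assms(3) nonneg(2)] assms(4,5)
    by (intro sum_mono quad_over_lin_convex_comb) auto
  also have "\<dots> \<le> u * z1 (Loop j) + v * z2 (Loop j)"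
    using assms(1,2,4,5) by (intro add_mono mult_left_mono) (auto simp: extended_feasible_def)
  finally have "persp_sum V j ?z ?a \<le> ?z (Loop j)"
    unfolding z .
  moreover have "z1 (Loop i) \<le> z1 (Node i) \<and> 0 \<le> z1 (Node i) \<and> z1 (Node i) \<le> 1
      \<Longrightarrow> z2 (Loop i) \<le> z2 (Node i) \<and> 0 \<le> z2 (Node i) \<and> z2 (Node i) \<le> 1
      \<Longrightarrow> ?z (Loop i) \<le> ?z (Node i) \<and> 0 \<le> ?z (Node i) \<and> ?z (Node i) \<le> 1" for i
    using assms(4-6) unfolding z
    by (smt (verit) mult_left_le mult_left_mono mult_nonneg_nonneg)
  ultimately show ?thesis
    using assms(1,2,4,5) by (auto simp: extended_feasible_def ell)
qed

lemma convex_extended_formulation: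
  assumes "finite V"
  shows "convex (extended_formulation V Lm j)"
proof (rule convexI)
  fix z1 z2 :: "'a coord \<Rightarrow> real" and u v :: real
  assume "z1 \<in> extended_formulation V Lm j" "z2 \<in> extended_formulation V Lm j"
    and uv: "0 \<le> u" "0 \<le> v" "u + v = 1"
  then obtain a1 a2 where "extended_feasible V Lm j z1 a1" "extended_feasible V Lm j z2 a2"
    and "supported_on (coords V Lm {j}) z1" "supported_on (coords V Lm {j}) z2"
    by (auto simp: extended_formulation_def)
  moreover from this have "extended_feasible V Lm j (u *\<^sub>R z1 + v *\<^sub>R z2) (\<lambda>S. u * a1 S + v * a2 S)"
    using assms uv by (intro extended_feasible_convex_comb) auto
  ultimately show "u *\<^sub>R z1 + v *\<^sub>R z2 \<in> extended_formulation V Lm j"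
    unfolding extended_formulation_def supported_on_def by (auto simp: scaleR_fun_def)
qed

lemma QP_generator_extended_feasible:
  assumes "finite V" "j \<in> V" "Lm \<subseteq> V" "x \<in> QP_generators V Lm {j}"
  shows "extended_feasible V Lm j x (\<lambda>S. \<Prod>i\<in>S. x (Node i))"
proof -
  define y where "y i = x (Node i)" for i
  let ?a = "\<lambda>S. \<Prod>i\<in>S. y i"
  let ?ell = "\<lambda>J1 J2. ell x ?a J1 J2"
  have y01: "0 \<le> y i" "y i \<le> 1" if "i \<in> V" for i
    using assms(4) that by (auto simp: QP_generators_def y_def)
  have ell_prod: "?ell J1 J2 = (\<Prod>i\<in>J1. y i) * (\<Prod>i\<in>J2. 1 - y i)"
    if "J1 \<subseteq> V" "J2 \<subseteq> V" "J1 \<inter> J2 = {}" for J1 J2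
    using zS_QP_generator[OF assms(4)] that finite_subset[OF _ assms(1)]
    by (simp add: ell_eq_alt_sum y_def alt_sum_prod)
  have ell_nonneg: "0 \<le> ?ell J1 J2" if "J1 \<subseteq> V" "J2 \<subseteq> V" "J1 \<inter> J2 = {}" for J1 J2
    using ell_prod[OF that] that y01 by (auto intro!: mult_nonneg_nonneg prod_nonneg)
  have persp_term: "quad_over_lin (?ell J (V - J)) (?ell (J - {j}) (V - J)) = y j * ?ell J (V - J)"
    if "J \<subseteq> V" "j \<in> J" for J
  proof -
    have "(\<Prod>i\<in>J. y i) = y j * (\<Prod>i\<in>J - {j}. y i)"
      using that finite_subset[OF _ assms(1)] by (simp add: prod.remove)
    moreover have "?ell J (V - J) = (\<Prod>i\<in>J. y i) * (\<Prod>i\<in>V - J. 1 - y i)"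
      by (rule ell_prod) (use that in auto)
    moreover have "?ell (J - {j}) (V - J) = (\<Prod>i\<in>J - {j}. y i) * (\<Prod>i\<in>V - J. 1 - y i)"
      by (rule ell_prod) (use that in auto)
    ultimately have "?ell J (V - J) = y j * ?ell (J - {j}) (V - J)"
      by (simp only: mult.assoc)
    moreover have "0 \<le> ?ell (J - {j}) (V - J)"
      using that by (intro ell_nonneg) auto
    ultimately show ?thesis
      by (auto simp: quad_over_lin_def power2_eq_square)
  qed
  have "(\<Sum>J | J \<subseteq> V \<and> j \<in> J. ?ell J (V - J)) = zS x ?a {j}"
    using zS_eq_sum_pairs[OF assms(1,2), of "{j}" x ?a] assms(2) by simp
  also have "\<dots> = y j"
    using zS_QP_generator[OF assms(4)] by (simp add: y_def)
  finally have "persp_sum V j x ?a = (y j)\<^sup>2"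
    by (simp add: persp_sum_def persp_term sum_distrib_left[symmetric] power2_eq_square)
  then have "persp_sum V j x ?a \<le> x (Loop j)"
    using assms(4) by (simp add: QP_generators_def y_def)
  moreover have "x (Loop i) \<le> x (Node i)" if "i \<in> Lm" for i
  proof -
    have "x (Loop i) \<le> (y i)\<^sup>2"
      using assms(4) that by (simp add: QP_generators_def y_def)
    also have "\<dots> \<le> y i"
      using y01 that assms(3) by (auto simp: power2_eq_square mult_left_le)
    finally show ?thesis
      by (simp add: y_def)
  qed
  moreover have "0 \<le> ?ell J (V - J)" if "J \<subseteq> V" for J
    using that by (intro ell_nonneg) auto
  ultimately have "extended_feasible V Lm j x ?a"
    using y01 assms(3) by (auto simp: extended_feasible_def y_def)
  then show ?thesis
    by (simp add: y_def)
qed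

lemma prod_of_bool:
  "finite A \<Longrightarrow> (\<Prod>i\<in>A. of_bool (P i) :: 'b::comm_semiring_1) = of_bool (\<forall>i\<in>A. P i)"
  by (induction A rule: finite_induct) auto

lemma mult_prod_interpolate:
  fixes u v :: real
  assumes "finite S" "j \<in> J" "0 \<le> u" "u \<le> v"
  shows "v * (\<Prod>i\<in>S. if i = j then u / v else of_bool (i \<in> J))
       = of_bool (S \<subseteq> J) * u + of_bool (S \<subseteq> J - {j}) * (v - u)"
proof (cases "j \<in> S")
  case True
  have "(\<Prod>i\<in>S. if i = j then u / v else of_bool (i \<in> J))
      = u / v * (\<Prod>i\<in>S - {j}. if i = j then u / v else of_bool (i \<in> J))"
    using assms(1) True by (simp add: prod.remove)
  also have "(\<Prod>i\<in>S - {j}. if i = j then u / v else of_bool (i \<in> J)) = (\<Prod>i\<in>S - {j}. of_bool (i \<in> J))"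
    by (rule prod.cong) auto
  moreover have "v * (u / v) = u"
    using assms(3,4) by (cases "v = 0") auto
  ultimately show ?thesis
    using assms(1,2) True by (auto simp: prod_of_bool)
next
  case False
  then have "(\<Prod>i\<in>S. if i = j then u / v else of_bool (i \<in> J)) = (\<Prod>i\<in>S. of_bool (i \<in> J))"
    by (intro prod.cong) auto
  also have "\<dots> = of_bool (S \<subseteq> J)"
    using assms(1) by (auto simp: prod_of_bool)
  finally have "(\<Prod>i\<in>S. if i = j then u / v else of_bool (i \<in> J)) = of_bool (S \<subseteq> J)" .
  then show ?thesis
    using False by (auto simp: algebra_simps)
qed

text \<open>The 0/1-points of \<open>J\<close> and \<open>J - {j}\<close> (where \<open>j \<in> J\<close>) merged into one point carrying
  their joint weight \<open>\<ell>_(n-1)(J - {j}, V - J)\<close>; its contribution to \<open>z_jj\<close> is the perspective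
  term of \<open>J\<close>. When that weight is \<open>0\<close>, so is \<open>\<ell>_n(J, V - J)\<close>, and \<open>0 / 0 = 0\<close> keeps the
  point in the unit cube.\<close>

definition split_node :: "('a coord \<Rightarrow> real) \<Rightarrow> ('a set \<Rightarrow> real) \<Rightarrow> 'a set \<Rightarrow> 'a \<Rightarrow> 'a set \<Rightarrow> 'a \<Rightarrow> real"
  where "split_node z a V j J i =
    (if i = j then ell z a J (V - J) / ell z a (J - {j}) (V - J) else of_bool (i \<in> J))"

lemma split_node_bounds:
  assumes "finite V" "\<forall>J. J \<subseteq> V \<longrightarrow> 0 \<le> ell z a J (V - J)" "J \<subseteq> V" "j \<in> J"
  shows "0 \<le> split_node z a V j J i" "split_node z a V j J i \<le> 1"
  using ell_persp_bounds[OF assms] by (auto simp: split_node_def divide_le_eq_1)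

lemma zS_eq_sum_split_node:
  assumes "finite V" "j \<in> V" "S \<subseteq> V" "\<forall>J. J \<subseteq> V \<longrightarrow> 0 \<le> ell z a J (V - J)"
  shows "zS z a S = (\<Sum>J | J \<subseteq> V \<and> j \<in> J.
                        ell z a (J - {j}) (V - J) * (\<Prod>i\<in>S. split_node z a V j J i))"
  unfolding zS_eq_sum_pairs[OF assms(1-3)]
proof (rule sum.cong)
  fix J assume "J \<in> {J. J \<subseteq> V \<and> j \<in> J}"
  then have J: "J \<subseteq> V" "j \<in> J"
    by auto
  have "finite S"
    using assms(1,3) finite_subset by blast
  then show "of_bool (S \<subseteq> J) * ell z a J (V - J) + of_bool (S \<subseteq> J - {j}) * ell z a (J - {j}) (V - (J - {j}))
      = ell z a (J - {j}) (V - J) * (\<Prod>i\<in>S. split_node z a V j J i)"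
    unfolding split_node_def ell_remove[OF assms(1) J(2,1)]
    using ell_persp_bounds[OF assms(1,4) J] J(2) ell_remove[OF assms(1) J(2,1)]
    by (subst mult_prod_interpolate) auto
qed simp

lemma extended_formulation_subset_QP:
  assumes "finite V" "j \<in> V" "Lm \<subseteq> V" "j \<notin> Lm"
  shows "extended_formulation V Lm j \<subseteq> QP V Lm {j}"
proof
  fix z assume "z \<in> extended_formulation V Lm j"
  then obtain a where supp: "supported_on (coords V Lm {j}) z" and feas: "extended_feasible V Lm j z a"
    by (auto simp: extended_formulation_def)
  then have nonneg: "\<forall>J. J \<subseteq> V \<longrightarrow> 0 \<le> ell z a J (V - J)"
    by (simp add: extended_feasible_def)
  let ?\<J> = "{J. J \<subseteq> V \<and> j \<in> J}"
  define \<mu> where "\<mu> J = ell z a (J - {j}) (V - J)" for J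
  define y where "y = split_node z a V j"
  define slack where "slack = z (Loop j) - persp_sum V j z a"
  \<comment> \<open>Off \<open>j\<close> the coordinates are 0/1, so lowering each minus loop by \<open>z_i - z_ii \<ge> 0\<close> keeps it below \<open>y_i\<^sup>2\<close>.\<close>
  define w where "w J i = (if i = j then (y J j)\<^sup>2 + slack else y J i - (z (Node i) - z (Loop i)))" for J i
  have fin: "finite ?\<J>"
    using assms(1) by (auto intro: finite_subset[of _ "Pow V"])
  have moments: "zS z a S = (\<Sum>J\<in>?\<J>. \<mu> J * (\<Prod>i\<in>S. y J i))" if "S \<subseteq> V" for S
    unfolding \<mu>_def y_def using zS_eq_sum_split_node[OF assms(1,2) that nonneg] .
  have \<mu>_nonneg: "0 \<le> \<mu> J" if "J \<in> ?\<J>" for J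
    using ell_persp_bounds[OF assms(1) nonneg, of J j] that by (auto simp: \<mu>_def)
  have \<mu>_sum: "(\<Sum>J\<in>?\<J>. \<mu> J) = 1"
    using moments[of "{}"] by (simp add: zS_def)
  have generator: "lift_point V (Lm \<union> {j}) (y J) (w J) \<in> QP_generators V Lm {j}" if "J \<in> ?\<J>" for J
  proof (rule lift_point_in_QP_generators)
    have "(y J i)\<^sup>2 = y J i" if "i \<in> Lm" for i
      using that assms(4) by (auto simp: y_def split_node_def)
    then show "\<forall>i\<in>Lm. w J i \<le> (y J i)\<^sup>2"
      using feas assms(4) by (auto simp: w_def extended_feasible_def)
    show "\<forall>i\<in>{j}. (y J i)\<^sup>2 \<le> w J i"
      using feas by (simp add: w_def slack_def extended_feasible_def)
  qed (use assms(2,3) split_node_bounds[OF assms(1) nonneg] that in \<open>auto simp: y_def\<close>)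
  have nodes: "z (Node i) = (\<Sum>J\<in>?\<J>. \<mu> J * y J i)" if "i \<in> V" for i
    using moments[of "{i}"] that by (simp add: zS_def)
  have "z = (\<Sum>J\<in>?\<J>. \<mu> J *\<^sub>R lift_point V (Lm \<union> {j}) (y J) (w J))"
  proof (rule supported_eq_sum_lift_point[OF fin supp])
    show "\<forall>i\<in>V. z (Node i) = (\<Sum>J\<in>?\<J>. \<mu> J * y J i)"
      using nodes by blast
    show "\<forall>e\<in>edges_complete V. z (Edge e) = (\<Sum>J\<in>?\<J>. \<mu> J * (\<Prod>i\<in>e. y J i))"
    proof
      fix e assume "e \<in> edges_complete V"
      then have "e \<subseteq> V" "card e = 2" "e \<noteq> {}"
        by (auto simp: edges_complete_def)
      then show "z (Edge e) = (\<Sum>J\<in>?\<J>. \<mu> J * (\<Prod>i\<in>e. y J i))"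
        using moments[of e] by (auto simp: zS_def)
    qed
    have "(\<Sum>J\<in>?\<J>. \<mu> J * (y J j)\<^sup>2) = persp_sum V j z a"
      unfolding persp_sum_def
    proof (rule sum.cong[OF refl])
      fix J assume "J \<in> ?\<J>"
      then show "\<mu> J * (y J j)\<^sup>2 = quad_over_lin (ell z a J (V - J)) (ell z a (J - {j}) (V - J))"
        using quad_over_lin_eq_mult_square[OF \<mu>_nonneg] by (simp add: y_def split_node_def \<mu>_def)
    qed
    then have "z (Loop j) = (\<Sum>J\<in>?\<J>. \<mu> J * w J j)"
      by (simp add: w_def slack_def distrib_left sum.distrib sum_distrib_right[symmetric] \<mu>_sum)
    moreover have "z (Loop i) = (\<Sum>J\<in>?\<J>. \<mu> J * w J i)" if "i \<in> Lm" for i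
    proof -
      have "i \<noteq> j" "i \<in> V"
        using that assms(3,4) by auto
      then show ?thesis
        by (simp add: w_def right_diff_distrib sum_subtractf sum_distrib_right[symmetric] \<mu>_sum nodes)
    qed
    ultimately show "\<forall>i\<in>Lm \<union> {j}. z (Loop i) = (\<Sum>J\<in>?\<J>. \<mu> J * w J i)"
      by blast
  qed
  also have "\<dots> \<in> convex hull QP_generators V Lm {j}"
    using \<mu>_nonneg generator \<mu>_sum
    by (intro convex_sum[OF fin convex_convex_hull]) (auto intro: hull_inc)
  finally show "z \<in> QP V Lm {j}"
    by (simp add: QP_eq_convex_hull)
qed

theorem corollary3:
  fixes V Lm :: "'a set" and j :: 'a
  assumes "finite V" and "j \<in> V" and "Lm \<subseteq> V" and "j \<notin> Lm"
  shows "QP V Lm {j} =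
    {z. supported_on (coords V Lm {j}) z \<and>
        (\<exists>a :: 'a set \<Rightarrow> real.
           ereal (z (Loop j)) \<ge>
             (\<Sum>J\<in>{J. J \<subseteq> V \<and> j \<in> J}. persp (ell z a J (V - J)) (ell z a (J - {j}) (V - J)))
         \<and> (\<forall>J. J \<subseteq> V \<longrightarrow> ell z a J (V - J) \<ge> 0)
         \<and> (\<forall>i\<in>Lm. z (Loop i) \<le> z (Node i) \<and> 0 \<le> z (Node i) \<and> z (Node i) \<le> 1))}"
proof -
  have "QP_generators V Lm {j} \<subseteq> extended_formulation V Lm j"
    using QP_generator_extended_feasible[OF assms(1-3)]
    by (auto simp: extended_formulation_def QP_generators_def)
  then have "QP V Lm {j} \<subseteq> extended_formulation V Lm j"
    unfolding QP_eq_convex_hull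
    by (rule hull_minimal) (rule convex_extended_formulation[OF assms(1)])
  moreover have "extended_formulation V Lm j \<subseteq> QP V Lm {j}"
    by (rule extended_formulation_subset_QP[OF assms])
  ultimately have "QP V Lm {j} = extended_formulation V Lm j"
    by (rule subset_antisym)
  then show ?thesis
    unfolding extended_feasible_iff[OF assms(1)] by (simp add: extended_formulation_def)
qed

end
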